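(* Let $N\ge1$, $\delta>0$, $0<s<1$, let $G$ be an Orlicz function with $\Delta_2$ constant $\mathfrak{c}$, and let $u\in L^G(\mathbb{R}^N)$. Let $\eta\in C^\infty(\mathbb{R}^N)$ with $0\le\eta\le1$, $\eta\equiv1$ on $B(0,1)$, $\mathrm{supp}(\eta)=\overline{B(0,2)}$, $\|\nabla\eta\|_\infty\le2$, and for $k\in\mathbb{N}$ set $\eta_k(x)=\eta(x/k)$ and $u_k=\eta_k u$. Then for every $k\in\mathbb{N}$, \begin{equation*} \Psi_{s,G,\delta}(u_k)\le\frac{\mathfrak{c}}{2}\Psi_{s,G,\delta}(u)+\frac{N\omega_N\mathfrak{c}^2}{2k(1-s)}\int_{\mathbb{R}^N}G\big(|u(x)|\,\delta^{1-s}\big)\,dx, \end{equation*} where $\omega_N$ denotes the surface measure of the unit sphere $\mathbb{S}^{N-1}$.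
   Context: An Orlicz function is a function $G:[0,\infty)\to[0,\infty)$ that is continuous, convex, increasing, with $G(0)=0$, satisfies the $\Delta_2$ condition $G(2t)\le \mathfrak{c}\,G(t)$ for all $t\ge0$ for some constant $\mathfrak{c}>2$ (the $\Delta_2$ constant), and $\lim_{t\to0^+}G(t)/t=0$. $L^G(\mathbb{R}^N)$ is the set of measurable $u$ with $\int_{\mathbb{R}^N}G(|u|)\,dx<\infty$. $\Psi_{s,G,\delta}(u)=\int_{\mathbb{R}^N}\int_{B(x,\delta)}G\big(\frac{|u(x)-u(y)|}{|x-y|^s}\big)\frac{dy\,dx}{|x-y|^N}$ (possibly $+\infty$). *)

theory Defs
  imports "HOL-Analysis.Analysis"
begin

definition orlicz :: "(real \<Rightarrow> real) \<Rightarrow> real \<Rightarrow> bool" where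
  "orlicz G c \<longleftrightarrow>
     (\<forall>t\<ge>0. G t \<ge> 0) \<and> continuous_on {0..} G \<and> convex_on {0..} G \<and>
     mono_on {0..} G \<and> G 0 = 0 \<and> c > 2 \<and> (\<forall>t\<ge>0. G (2 * t) \<le> c * G t) \<and>
     ((\<lambda>t. G t / t) \<longlongrightarrow> 0) (at_right 0)"

definition in_LG :: "(real \<Rightarrow> real) \<Rightarrow> ('a::euclidean_space \<Rightarrow> real) \<Rightarrow> bool" where
  "in_LG G u \<longleftrightarrow> u \<in> borel_measurable lebesgue \<and>
     (\<integral>\<^sup>+ x. ennreal (G \<bar>u x\<bar>) \<partial>lebesgue) < \<infinity>"

definition Psi :: "real \<Rightarrow> (real \<Rightarrow> real) \<Rightarrow> real \<Rightarrow> ('a::euclidean_space \<Rightarrow> real) \<Rightarrow> ennreal" where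
  "Psi s G \<delta> u = (\<integral>\<^sup>+ x. (\<integral>\<^sup>+ y. indicator (ball x \<delta>) y *
      ennreal (G (\<bar>u x - u y\<bar> / dist x y powr s) / dist x y ^ DIM('a)) \<partial>lebesgue) \<partial>lebesgue)"

definition dirderiv :: "'a::real_normed_vector \<Rightarrow> ('a \<Rightarrow> real) \<Rightarrow> 'a \<Rightarrow> real" where
  "dirderiv v f x = (THE d. ((\<lambda>t. f (x + t *\<^sub>R v)) has_real_derivative d) (at 0))"

fun iter_dirderiv :: "'a::real_normed_vector list \<Rightarrow> ('a \<Rightarrow> real) \<Rightarrow> 'a \<Rightarrow> real" where
  "iter_dirderiv [] f = f"
| "iter_dirderiv (v # vs) f = dirderiv v (iter_dirderiv vs f)"

text \<open>f is C^\<infinity> on the whole space: all iterated directional derivatives exist and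
  are continuous (equivalently all partial derivatives of all orders exist and are continuous).\<close>
definition smooth_fun :: "('a::real_normed_vector \<Rightarrow> real) \<Rightarrow> bool" where
  "smooth_fun f \<longleftrightarrow>
     (\<forall>vs v x. (\<lambda>t. iter_dirderiv vs f (x + t *\<^sub>R v)) differentiable (at 0)) \<and>
     (\<forall>vs. continuous_on UNIV (iter_dirderiv vs f))"

text \<open>Surface measure of the unit sphere S^{N-1}: N times the volume of the unit ball.\<close>
definition sphere_area :: "'a::euclidean_space itself \<Rightarrow> real" where
  "sphere_area _ = real DIM('a) * measure lebesgue (ball (0::'a) 1)"

end

theory Submission
  imports Defs
begin

text \<open>
  For |x - y| = d < \<delta>, the bounds 0 \<le> \<eta>_k \<le> 1 and Lip(\<eta>_k) \<le> 2/k give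
  |\<eta>_k(x) u(x) - \<eta>_k(y) u(y)| \<le> |u(x) - u(y)| + (2d/k) |u(y)|.
  Convexity and the \<Delta>_2 condition split G of this sum into c/2 times the integrand
  of \<Psi>(u) plus c/2 times G(2 d^(1-s) |u(y)| / k); as (d/\<delta>)^(1-s) / k \<le> 1, convexity
  once more bounds the latter by (c/k) (d/\<delta>)^(1-s) G(|u(y)| \<delta>^(1-s)).
  Integrating first in x, the layer-cake formula gives
  \<integral> over B(y,\<delta>) of |x - y|^(1-s-N) dx \<le> \<omega>_N \<delta>^(1-s) / (1 - s).
\<close>

section \<open>Orlicz functions\<close>

lemma orlicz_gt_2: "orlicz G c \<Longrightarrow> 2 < c"
  unfolding orlicz_def by blast

lemma orlicz_nonneg: "orlicz G c \<Longrightarrow> 0 \<le> t \<Longrightarrow> 0 \<le> G t"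
  unfolding orlicz_def by blast

lemma orlicz_mono: "orlicz G c \<Longrightarrow> 0 \<le> a \<Longrightarrow> a \<le> b \<Longrightarrow> G a \<le> G b"
  unfolding orlicz_def by (meson atLeast_iff mono_onD order_trans)

lemma orlicz_doubling: "orlicz G c \<Longrightarrow> 0 \<le> t \<Longrightarrow> G (2 * t) \<le> c * G t"
  unfolding orlicz_def by blast

lemma orlicz_add_le:
  assumes G: "orlicz G c" and "0 \<le> a" "0 \<le> b"
  shows "G (a + b) \<le> c / 2 * (G a + G b)"
proof -
  have "convex_on {0..} G"
    using G unfolding orlicz_def by blast
  have "G (a + b) = G ((1 - 1/2) *\<^sub>R (2 * a) + (1/2) *\<^sub>R (2 * b))"
    by simp
  also have "\<dots> \<le> (1 - 1/2) * G (2 * a) + (1/2) * G (2 * b)"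
    by (rule convex_onD[OF \<open>convex_on {0..} G\<close>]) (use assms in auto)
  also have "\<dots> \<le> (1/2) * (c * G a) + (1/2) * (c * G b)"
    using orlicz_doubling[OF G assms(2)] orlicz_doubling[OF G assms(3)]
    by (intro add_mono mult_left_mono) auto
  finally show ?thesis
    by (simp add: algebra_simps)
qed

lemma orlicz_scale_le:
  assumes G: "orlicz G c" and "0 \<le> l" "l \<le> 1" "0 \<le> t"
  shows "G (l * t) \<le> l * G t"
proof -
  have "convex_on {0..} G" "G 0 = 0"
    using G unfolding orlicz_def by auto
  have "G (l * t) = G ((1 - l) *\<^sub>R 0 + l *\<^sub>R t)"
    by simp
  also have "\<dots> \<le> (1 - l) * G 0 + l * G t"
    by (rule convex_onD[OF \<open>convex_on {0..} G\<close>]) (use assms in auto)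
  finally show ?thesis
    using \<open>G 0 = 0\<close> by simp
qed

lemma borel_measurable_orlicz_abs:
  assumes "orlicz G c"
  shows "(\<lambda>v. G \<bar>v\<bar>) \<in> borel_measurable borel"
proof -
  have "continuous_on {0..} G"
    using assms unfolding orlicz_def by blast
  then have "continuous_on UNIV (\<lambda>v::real. G \<bar>v\<bar>)"
    by (rule continuous_on_compose2[of _ _ _ abs]) (auto intro: continuous_on_rabs continuous_on_id)
  then show ?thesis
    by (rule borel_measurable_continuous_onI)
qed

lemma orlicz_cutoff_diff_le:
  assumes G: "orlicz G c" and d: "0 < d" "d \<le> \<delta>" and s: "s \<le> 1"
    and e: "0 \<le> e" "e \<le> 1" and e_diff: "\<bar>e - e'\<bar> \<le> L * d" and L: "0 \<le> L" "L \<le> 2"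
  shows "G (\<bar>e * p - e' * q\<bar> / d powr s)
    \<le> c / 2 * G (\<bar>p - q\<bar> / d powr s) + c\<^sup>2 * L / 4 * (d / \<delta>) powr (1 - s) * G (\<bar>q\<bar> * \<delta> powr (1 - s))"
proof -
  define l where "l = L / 2 * (d / \<delta>) powr (1 - s)"
  define W where "W = \<bar>q\<bar> * \<delta> powr (1 - s)"
  have "(d / \<delta>) powr (1 - s) \<le> 1 powr (1 - s)"
    using d s by (intro powr_mono2) auto
  then have "L * (d / \<delta>) powr (1 - s) \<le> 2 * 1"
    using L by (intro mult_mono) auto
  then have l: "0 \<le> l" "l \<le> 1"
    using L unfolding l_def by auto
  have "\<bar>e * p - e' * q\<bar> = \<bar>e * (p - q) + (e - e') * q\<bar>"
    by (simp add: algebra_simps)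
  also have "\<dots> \<le> \<bar>p - q\<bar> + L * d * \<bar>q\<bar>"
    using e e_diff by (intro order_trans[OF abs_triangle_ineq] add_mono)
      (auto simp: abs_mult mult_left_le_one_le mult_right_mono)
  finally have "\<bar>e * p - e' * q\<bar> / d powr s \<le> (\<bar>p - q\<bar> + L * d * \<bar>q\<bar>) / d powr s"
    by (simp add: divide_right_mono)
  also have "\<dots> = \<bar>p - q\<bar> / d powr s + L * (d / d powr s) * \<bar>q\<bar>"
    by (simp add: add_divide_distrib)
  also have "L * (d / d powr s) * \<bar>q\<bar> = l * (2 * W)"
    using d by (simp add: l_def W_def powr_diff powr_divide field_simps)
  finally have "G (\<bar>e * p - e' * q\<bar> / d powr s) \<le> G (\<bar>p - q\<bar> / d powr s + l * (2 * W))"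
    by (rule orlicz_mono[OF G, rotated]) simp
  also have "\<dots> \<le> c / 2 * (G (\<bar>p - q\<bar> / d powr s) + G (l * (2 * W)))"
    using l by (intro orlicz_add_le[OF G]) (auto simp: W_def)
  also have "\<dots> \<le> c / 2 * (G (\<bar>p - q\<bar> / d powr s) + l * (c * G W))"
  proof -
    have "G (l * (2 * W)) \<le> l * G (2 * W)"
      using l by (intro orlicz_scale_le[OF G]) (auto simp: W_def)
    also have "\<dots> \<le> l * (c * G W)"
      using l orlicz_doubling[OF G, of W] by (intro mult_left_mono) (auto simp: W_def)
    finally show ?thesis
      using orlicz_gt_2[OF G] by (intro mult_left_mono add_left_mono) auto
  qed
  finally show ?thesis
    by (simp add: l_def W_def power2_eq_square field_simps)
qed

section \<open>A singular integral over balls\<close>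

lemma sigma_finite_lebesgue: "sigma_finite_measure (lebesgue :: 'a::euclidean_space measure)"
proof -
  obtain A :: "'a set set" where A: "countable A" "A \<subseteq> sets lborel" "\<Union> A = UNIV"
      "\<forall>a\<in>A. emeasure lborel a \<noteq> \<infinity>"
    using sigma_finite_measure.sigma_finite_countable[OF sigma_finite_lborel] by auto
  then show ?thesis
    unfolding sigma_finite_measure_def by (intro exI[of _ A]) (auto simp: subset_eq)
qed

lemma nn_integral_layer_cake:
  fixes f :: "'a \<Rightarrow> real"
  assumes M: "sigma_finite_measure M" and f: "f \<in> borel_measurable M"
  shows "(\<integral>\<^sup>+x. ennreal (f x) \<partial>M)
    = (\<integral>\<^sup>+t. indicator {0<..} t * emeasure M {x\<in>space M. t < f x} \<partial>lborel)"
proof -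
  interpret pair_sigma_finite lborel M
    by (intro pair_sigma_finite.intro sigma_finite_lborel M)
  have "ennreal (f x) = (\<integral>\<^sup>+t. indicator {0<..<f x} t \<partial>lborel)" for x
    by (cases "0 \<le> f x") (auto simp: emeasure_lborel_Ioo ennreal_neg)
  then have "(\<integral>\<^sup>+x. ennreal (f x) \<partial>M) = (\<integral>\<^sup>+x. \<integral>\<^sup>+t. indicator {0<..<f x} t \<partial>lborel \<partial>M)"
    by simp
  also have "\<dots> = (\<integral>\<^sup>+t. \<integral>\<^sup>+x. indicator {0<..<f x} t \<partial>M \<partial>lborel)"
    by (rule Fubini') (use f in \<open>simp add: indicator_def greaterThanLessThan_iff, measurable\<close>)
  also have "\<dots> = (\<integral>\<^sup>+t. \<integral>\<^sup>+x. indicator {0<..} t * indicator {x\<in>space M. t < f x} x \<partial>M \<partial>lborel)"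
    by (intro nn_integral_cong) (auto simp: indicator_def)
  also have "\<dots> = (\<integral>\<^sup>+t. indicator {0<..} t * emeasure M {x\<in>space M. t < f x} \<partial>lborel)"
    using f by (intro nn_integral_cong nn_integral_cmult_indicator) measurable
  finally show ?thesis .
qed

lemma nn_integral_min_powr_le:
  fixes a \<delta> :: real and n :: nat
  assumes a: "0 < a" "a < n" and \<delta>: "0 < \<delta>"
  shows "(\<integral>\<^sup>+t. indicator {0<..} t * ennreal (min \<delta> (t powr (-1/a)) ^ n) \<partial>lborel)
    \<le> ennreal (n * \<delta> powr (n - a) / (n - a))"
proof -
  define T where "T = \<delta> powr (-a)"
  have "-a * (- real n / a + 1) = n - a"
    using a by (simp add: field_simps)
  then have T: "0 < T" "T powr (- real n / a + 1) = \<delta> powr (n - a)" "T * \<delta> ^ n = \<delta> powr (n - a)"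
    using \<delta> by (simp_all add: T_def powr_powr powr_realpow[symmetric] powr_add[symmetric])
  have exponent: "- real n / a < -1" "- real n / a + 1 = -(n - a)/a"
    using a by (simp_all add: field_simps)
  have pointwise: "indicator {0<..} t * ennreal (min \<delta> (t powr (-1/a)) ^ n)
      \<le> ennreal (indicator {0..T} t * \<delta> ^ n) + ennreal (indicator {T..} t * t powr (- real n / a))" for t
  proof (cases "0 < t \<and> t \<le> T")
    case True
    have "ennreal (min \<delta> (t powr (-1/a)) ^ n) \<le> ennreal (\<delta> ^ n)"
      using \<delta> by (intro ennreal_leI power_mono) auto
    then show ?thesis using True by (auto simp: indicator_def intro: add_increasing2)
  next
    case False
    have "min \<delta> (t powr (-1/a)) ^ n \<le> (t powr (-1/a)) ^ n"
      using \<delta> by (intro power_mono) auto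
    also have "\<dots> = t powr (- real n / a)" if "0 < t"
      using that by (simp add: powr_realpow[symmetric] powr_powr)
    finally show ?thesis using False T(1) by (auto simp: indicator_def intro!: ennreal_leI)
  qed
  have "(\<integral>\<^sup>+t. indicator {0<..} t * ennreal (min \<delta> (t powr (-1/a)) ^ n) \<partial>lborel)
      \<le> (\<integral>\<^sup>+t. ennreal (indicator {0..T} t * \<delta> ^ n) \<partial>lborel)
        + (\<integral>\<^sup>+t. ennreal (indicator {T..} t * t powr (- real n / a)) \<partial>lborel)"
    using pointwise by (subst nn_integral_add[symmetric]) (auto intro!: nn_integral_mono)
  also have "(\<integral>\<^sup>+t. ennreal (indicator {0..T} t * \<delta> ^ n) \<partial>lborel) = ennreal (T * \<delta> ^ n)"
    using T(1) \<delta> by (intro nn_integral_has_integral_lebesgue)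
      (auto intro: has_integral_const_real[THEN has_integral_eq_rhs])
  also have "(\<integral>\<^sup>+t. ennreal (indicator {T..} t * t powr (- real n / a)) \<partial>lborel)
      = ennreal (-(T powr (- real n / a + 1)) / (- real n / a + 1))"
    using exponent T(1) by (intro nn_integral_has_integral_lebesgue has_integral_powr_to_inf) auto
  also have "ennreal (T * \<delta> ^ n) + ennreal (-(T powr (- real n / a + 1)) / (- real n / a + 1))
      = ennreal (n * \<delta> powr (n - a) / (n - a))"
  proof -
    have "-(T powr (- real n / a + 1)) / (- real n / a + 1) = -(\<delta> powr (n - a)) / (-(n - a)/a)"
      by (subst T(2)) (simp only: exponent(2))
    also have "\<dots> = a / (n - a) * \<delta> powr (n - a)"
      using a by (simp add: field_simps)
    finally have "-(T powr (- real n / a + 1)) / (- real n / a + 1) = a / (n - a) * \<delta> powr (n - a)" .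
    moreover have "\<delta> powr (n - a) + a / (n - a) * \<delta> powr (n - a) = n * \<delta> powr (n - a) / (n - a)"
      using a by (simp add: field_simps)
    ultimately show ?thesis
      using a by (simp add: T ennreal_plus[symmetric] del: ennreal_plus)
  qed
  finally show ?thesis .
qed

lemma emeasure_lebesgue_ball:
  fixes c :: "'a::euclidean_space"
  assumes "0 \<le> r"
  shows "emeasure lebesgue (ball c r) = ennreal (measure lebesgue (ball (0::'a) 1) * r ^ DIM('a))"
  using assms by (simp add: emeasure_ball content_ball)

lemma nn_integral_ball_dist_powr_le:
  fixes y :: "'a::euclidean_space" and b \<delta> :: real
  assumes b: "0 < b" "b < DIM('a)" and \<delta>: "0 < \<delta>"
  shows "(\<integral>\<^sup>+x. indicator (ball y \<delta>) x * ennreal (dist x y powr (b - DIM('a))) \<partial>lebesgue)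
    \<le> ennreal (sphere_area TYPE('a) * \<delta> powr b / b)"
proof -
  define a where "a = DIM('a) - b"
  define V where "V = measure lebesgue (ball (0::'a) 1)"
  define f where "f x = indicator (ball y \<delta>) x * dist x y powr (-a)" for x
  have a: "0 < a" "a < DIM('a)" "DIM('a) - a = b"
    using b by (auto simp: a_def)
  have [measurable]: "ball y \<delta> \<in> sets borel"
    by simp
  have f_meas: "f \<in> borel_measurable lebesgue"
    unfolding f_def by (intro measurable_completion) measurable
  have superlevel: "{x \<in> space lebesgue. t < f x} \<subseteq> ball y (min \<delta> (t powr (-1/a)))" if "0 < t" for t
  proof
    fix x assume "x \<in> {x \<in> space lebesgue. t < f x}"
    then have "t < f x"
      by simp
    then have x: "x \<in> ball y \<delta>" "t < dist x y powr (-a)"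
      using that by (auto simp: f_def indicator_def of_bool_def split: if_splits)
    then have "0 < dist x y"
      using that by (cases "x = y") auto \<comment> \<open>since 0 powr p = 0\<close>
    then have "dist x y = (dist x y powr (-a)) powr (-1/a)"
      using a by (simp add: powr_powr)
    also have "\<dots> < t powr (-1/a)"
      using x(2) that a by (intro powr_less_mono2_neg) auto
    finally show "x \<in> ball y (min \<delta> (t powr (-1/a)))"
      using x(1) by (simp add: dist_commute)
  qed
  have "(\<integral>\<^sup>+x. indicator (ball y \<delta>) x * ennreal (dist x y powr (b - DIM('a))) \<partial>lebesgue)
      = (\<integral>\<^sup>+x. ennreal (f x) \<partial>lebesgue)"
    by (intro nn_integral_cong) (simp add: f_def a_def indicator_def)
  also have "\<dots> = (\<integral>\<^sup>+t. indicator {0<..} t * emeasure lebesgue {x \<in> space lebesgue. t < f x} \<partial>lborel)"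
    by (rule nn_integral_layer_cake[OF sigma_finite_lebesgue f_meas])
  also have "\<dots> \<le> (\<integral>\<^sup>+t. ennreal V * (indicator {0<..} t * ennreal (min \<delta> (t powr (-1/a)) ^ DIM('a))) \<partial>lborel)"
  proof (intro nn_integral_mono)
    fix t :: real
    show "indicator {0<..} t * emeasure lebesgue {x \<in> space lebesgue. t < f x}
        \<le> ennreal V * (indicator {0<..} t * ennreal (min \<delta> (t powr (-1/a)) ^ DIM('a)))"
    proof (cases "0 < t")
      case True
      then have "emeasure lebesgue {x \<in> space lebesgue. t < f x}
          \<le> emeasure lebesgue (ball y (min \<delta> (t powr (-1/a))))"
        using superlevel by (intro emeasure_mono) auto
      also have "\<dots> = ennreal (V * min \<delta> (t powr (-1/a)) ^ DIM('a))"
        unfolding V_def using \<delta> by (intro emeasure_lebesgue_ball) simp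
      finally show ?thesis
        using True \<delta> by (simp add: V_def ennreal_mult)
    qed simp
  qed
  also have "\<dots> = ennreal V * (\<integral>\<^sup>+t. indicator {0<..} t * ennreal (min \<delta> (t powr (-1/a)) ^ DIM('a)) \<partial>lborel)"
    by (rule nn_integral_cmult) measurable
  also have "\<dots> \<le> ennreal V * ennreal (DIM('a) * \<delta> powr b / b)"
    using nn_integral_min_powr_le[OF a(1,2) \<delta>] a(3) by (intro mult_left_mono) auto
  also have "\<dots> = ennreal (DIM('a) * V * \<delta> powr b / b)"
    using b by (simp add: V_def ennreal_mult[symmetric] mult_ac)
  finally show ?thesis
    by (simp add: sphere_area_def V_def)
qed

lemma nn_integral_nn_integral_linear:
  assumes N: "sigma_finite_measure N"
    and f: "(\<lambda>(x, y). f x y) \<in> borel_measurable (M \<Otimes>\<^sub>M N)"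
    and h: "(\<lambda>(x, y). h x y) \<in> borel_measurable (M \<Otimes>\<^sub>M N)"
  shows "(\<integral>\<^sup>+x. \<integral>\<^sup>+y. a * f x y + b * h x y \<partial>N \<partial>M)
    = a * (\<integral>\<^sup>+x. \<integral>\<^sup>+y. f x y \<partial>N \<partial>M) + b * (\<integral>\<^sup>+x. \<integral>\<^sup>+y. h x y \<partial>N \<partial>M)"
proof -
  have sections: "f x \<in> borel_measurable N" "h x \<in> borel_measurable N" if "x \<in> space M" for x
    using measurable_Pair2[OF f that] measurable_Pair2[OF h that] by simp_all
  have "(\<lambda>x. \<integral>\<^sup>+y. f x y \<partial>N) \<in> borel_measurable M" "(\<lambda>x. \<integral>\<^sup>+y. h x y \<partial>N) \<in> borel_measurable M"
    using sigma_finite_measure.borel_measurable_nn_integral[OF N f]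
      sigma_finite_measure.borel_measurable_nn_integral[OF N h] by simp_all
  moreover have "(\<integral>\<^sup>+x. \<integral>\<^sup>+y. a * f x y + b * h x y \<partial>N \<partial>M)
      = (\<integral>\<^sup>+x. a * (\<integral>\<^sup>+y. f x y \<partial>N) + b * (\<integral>\<^sup>+y. h x y \<partial>N) \<partial>M)"
    using sections by (intro nn_integral_cong) (simp add: nn_integral_add nn_integral_cmult)
  ultimately show ?thesis
    by (simp add: nn_integral_add nn_integral_cmult)
qed

lemma measurable_ident_borel_lebesgue [measurable]:
  "(\<lambda>x::'a::euclidean_space. x) \<in> borel_measurable lebesgue"
  by (rule measurable_completion) simp

lemma borel_measurable_ball_dist_powr_kernel:
  fixes g :: "'a::euclidean_space \<Rightarrow> ennreal"
  assumes [measurable]: "g \<in> borel_measurable lebesgue"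
  shows "(\<lambda>(x, y). g y * (indicator (ball y \<delta>) x * ennreal (dist x y powr p)))
    \<in> borel_measurable (lebesgue \<Otimes>\<^sub>M lebesgue)"
proof -
  have "(\<lambda>(x, y). g y * (indicator (ball y \<delta>) x * ennreal (dist x y powr p)))
      = (\<lambda>(x, y). g y * ((if dist x y < \<delta> then 1 else 0) * ennreal (dist x y powr p)))"
    by (auto simp: fun_eq_iff indicator_def dist_commute)
  also have "\<dots> \<in> borel_measurable (lebesgue \<Otimes>\<^sub>M lebesgue)"
    by measurable
  finally show ?thesis .
qed

lemma nn_integral_ball_dist_powr_kernel_le:
  fixes g :: "'a::euclidean_space \<Rightarrow> ennreal" and b \<delta> :: real
  assumes g [measurable]: "g \<in> borel_measurable lebesgue" and b: "0 < b" "b < DIM('a)" and \<delta>: "0 < \<delta>"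
  shows "(\<integral>\<^sup>+x. \<integral>\<^sup>+y. g y * (indicator (ball y \<delta>) x * ennreal (dist x y powr (b - DIM('a)))) \<partial>lebesgue \<partial>lebesgue)
    \<le> ennreal (sphere_area TYPE('a) * \<delta> powr b / b) * (\<integral>\<^sup>+y. g y \<partial>lebesgue)"
proof -
  interpret pair_sigma_finite lebesgue "lebesgue :: 'a measure"
    by (intro pair_sigma_finite.intro sigma_finite_lebesgue)
  have "(\<integral>\<^sup>+x. \<integral>\<^sup>+y. g y * (indicator (ball y \<delta>) x * ennreal (dist x y powr (b - DIM('a)))) \<partial>lebesgue \<partial>lebesgue)
      = (\<integral>\<^sup>+y. \<integral>\<^sup>+x. g y * (indicator (ball y \<delta>) x * ennreal (dist x y powr (b - DIM('a)))) \<partial>lebesgue \<partial>lebesgue)"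
    by (rule Fubini'[symmetric]) (rule borel_measurable_ball_dist_powr_kernel[OF g])
  also have "\<dots> = (\<integral>\<^sup>+y. g y * (\<integral>\<^sup>+x. indicator (ball y \<delta>) x * ennreal (dist x y powr (b - DIM('a))) \<partial>lebesgue) \<partial>lebesgue)"
  proof (intro nn_integral_cong nn_integral_cmult)
    fix y :: 'a
    have [measurable]: "ball y \<delta> \<in> sets borel"
      by simp
    show "(\<lambda>x. indicator (ball y \<delta>) x * ennreal (dist x y powr (b - DIM('a)))) \<in> borel_measurable lebesgue"
      by measurable
  qed
  also have "\<dots> \<le> (\<integral>\<^sup>+y. g y * ennreal (sphere_area TYPE('a) * \<delta> powr b / b) \<partial>lebesgue)"
    using nn_integral_ball_dist_powr_le[OF b \<delta>] by (intro nn_integral_mono mult_left_mono) auto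
  also have "\<dots> = ennreal (sphere_area TYPE('a) * \<delta> powr b / b) * (\<integral>\<^sup>+y. g y \<partial>lebesgue)"
    by (subst nn_integral_multc[OF g]) (rule mult.commute)
  finally show ?thesis .
qed

section \<open>The nonlocal modular of a product\<close>

definition Psi_kernel :: "real \<Rightarrow> (real \<Rightarrow> real) \<Rightarrow> real \<Rightarrow> ('a::euclidean_space \<Rightarrow> real) \<Rightarrow> 'a \<Rightarrow> 'a \<Rightarrow> ennreal"
  where "Psi_kernel s G \<delta> u x y =
    indicator (ball x \<delta>) y * ennreal (G (\<bar>u x - u y\<bar> / dist x y powr s) / dist x y ^ DIM('a))"

lemma Psi_eq_nn_integral_Psi_kernel:
  "Psi s G \<delta> u = (\<integral>\<^sup>+x. \<integral>\<^sup>+y. Psi_kernel s G \<delta> u x y \<partial>lebesgue \<partial>lebesgue)"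
  unfolding Psi_def Psi_kernel_def ..

lemma borel_measurable_Psi_kernel:
  fixes u :: "'a::euclidean_space \<Rightarrow> real"
  assumes G: "orlicz G c" and u [measurable]: "u \<in> borel_measurable lebesgue"
  shows "(\<lambda>(x, y). Psi_kernel s G \<delta> u x y) \<in> borel_measurable (lebesgue \<Otimes>\<^sub>M lebesgue)"
proof -
  note borel_measurable_orlicz_abs[OF G, measurable]
  have "(\<lambda>(x, y). Psi_kernel s G \<delta> u x y) = (\<lambda>(x, y). (if dist x y < \<delta> then 1 else 0)
      * ennreal (G \<bar>(u x - u y) / dist x y powr s\<bar> / dist x y ^ DIM('a)))"
    by (auto simp: fun_eq_iff Psi_kernel_def indicator_def abs_divide)
  also have "\<dots> \<in> borel_measurable (lebesgue \<Otimes>\<^sub>M lebesgue)"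
    by measurable
  finally show ?thesis .
qed

lemma Psi_kernel_mult_le:
  fixes e u :: "'a::euclidean_space \<Rightarrow> real"
  assumes G: "orlicz G c" and \<delta>: "0 < \<delta>" and s: "s \<le> 1"
    and e: "\<And>x. 0 \<le> e x \<and> e x \<le> 1" and e_lip: "\<And>x y. \<bar>e x - e y\<bar> \<le> L * dist x y"
    and L: "0 \<le> L" "L \<le> 2"
  shows "Psi_kernel s G \<delta> (\<lambda>x. e x * u x) x y
    \<le> ennreal (c / 2) * Psi_kernel s G \<delta> u x y
      + ennreal (c\<^sup>2 * L / 4 * \<delta> powr (s - 1)) * (ennreal (G (\<bar>u y\<bar> * \<delta> powr (1 - s)))
        * (indicator (ball y \<delta>) x * ennreal (dist x y powr (1 - s - DIM('a)))))"
proof (cases "x \<noteq> y \<and> dist x y < \<delta>")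
  case False \<comment> \<open>on the diagonal the kernel vanishes because z / 0 = 0\<close>
  then have "Psi_kernel s G \<delta> (\<lambda>x. e x * u x) x y = 0"
    by (auto simp: Psi_kernel_def indicator_def dist_commute zero_power[OF DIM_positive])
  then show ?thesis
    by simp
next
  case True
  define d where "d = dist x y"
  define C where "C = c\<^sup>2 * L / 4 * \<delta> powr (s - 1)"
  define K where "K = G (\<bar>u x - u y\<bar> / d powr s) / d ^ DIM('a)"
  define W where "W = G (\<bar>u y\<bar> * \<delta> powr (1 - s))"
  define w where "w = d powr (1 - s - DIM('a))"
  have d: "0 < d" "d \<le> \<delta>"
    using True by (auto simp: d_def)
  have nonneg: "0 \<le> c / 2" "0 \<le> K" "0 \<le> C" "0 \<le> W" "0 \<le> w"
    using d L orlicz_gt_2[OF G]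
    by (auto simp: C_def K_def W_def w_def intro!: orlicz_nonneg[OF G] divide_nonneg_pos)
  have weight: "(d / \<delta>) powr (1 - s) / d ^ DIM('a) = \<delta> powr (s - 1) * w"
  proof -
    have "\<delta> powr (s - 1) = 1 / \<delta> powr (1 - s)"
      using powr_minus_divide[of \<delta> "1 - s"] by simp
    moreover have "w = d powr (1 - s) / d ^ DIM('a)"
      using d by (simp add: w_def powr_diff powr_realpow)
    ultimately show ?thesis
      using d \<delta> by (simp add: powr_divide)
  qed
  have "G (\<bar>e x * u x - e y * u y\<bar> / d powr s) / d ^ DIM('a)
      \<le> (c / 2 * G (\<bar>u x - u y\<bar> / d powr s) + c\<^sup>2 * L / 4 * (d / \<delta>) powr (1 - s) * W) / d ^ DIM('a)"
    using d s e[of x] e_lip[of x y] L unfolding W_def d_def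
    by (intro divide_right_mono orlicz_cutoff_diff_le[OF G]) auto
  also have "\<dots> = c / 2 * K + c\<^sup>2 * L / 4 * W * ((d / \<delta>) powr (1 - s) / d ^ DIM('a))"
    using d by (simp add: K_def field_simps)
  also have "\<dots> = c / 2 * K + C * (W * w)"
    unfolding weight C_def by (simp add: mult_ac)
  finally have "ennreal (G (\<bar>e x * u x - e y * u y\<bar> / d powr s) / d ^ DIM('a))
      \<le> ennreal (c / 2) * ennreal K + ennreal C * (ennreal W * ennreal w)"
    using nonneg by (simp add: ennreal_leI ennreal_plus[symmetric] ennreal_mult[symmetric] del: ennreal_plus)
  then show ?thesis
    using True by (simp add: Psi_kernel_def d_def C_def K_def W_def w_def dist_commute)
qed

lemma Psi_mult_le:
  fixes e u :: "'a::euclidean_space \<Rightarrow> real"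
  assumes G: "orlicz G c" and \<delta>: "0 < \<delta>" and s: "0 < s" "s < 1"
    and u: "u \<in> borel_measurable lebesgue"
    and e: "\<And>x. 0 \<le> e x \<and> e x \<le> 1" and e_lip: "\<And>x y. \<bar>e x - e y\<bar> \<le> L * dist x y"
    and L: "0 \<le> L" "L \<le> 2"
  shows "Psi s G \<delta> (\<lambda>x. e x * u x)
    \<le> ennreal (c / 2) * Psi s G \<delta> u
      + ennreal (c\<^sup>2 * L * sphere_area TYPE('a) / (4 * (1 - s)))
        * (\<integral>\<^sup>+x. ennreal (G (\<bar>u x\<bar> * \<delta> powr (1 - s))) \<partial>lebesgue)"
proof -
  define g where "g y = ennreal (G (\<bar>u y\<bar> * \<delta> powr (1 - s)))" for y
  define H where "H x y = g y * (indicator (ball y \<delta>) x * ennreal (dist x y powr (1 - s - DIM('a))))"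
    for x y :: 'a
  define C where "C = c\<^sup>2 * L / 4 * \<delta> powr (s - 1)"
  define S where "S = sphere_area TYPE('a) * \<delta> powr (1 - s) / (1 - s)"
  have b: "0 < 1 - s" "1 - s < DIM('a)"
    using s DIM_positive[where 'a='a] by linarith+
  have g_meas: "g \<in> borel_measurable lebesgue"
    using measurable_compose[OF _ borel_measurable_orlicz_abs[OF G], of "\<lambda>y. u y * \<delta> powr (1 - s)"] u
    by (simp add: g_def[abs_def] abs_mult)
  have const: "ennreal C * ennreal S = ennreal (c\<^sup>2 * L * sphere_area TYPE('a) / (4 * (1 - s)))"
  proof -
    have "\<delta> powr (s - 1) * \<delta> powr (1 - s) = 1"
      using \<delta> by (simp add: powr_add[symmetric])
    then show ?thesis
      using b L by (simp add: C_def S_def sphere_area_def ennreal_mult[symmetric] field_simps)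
  qed
  have "Psi s G \<delta> (\<lambda>x. e x * u x)
      \<le> (\<integral>\<^sup>+x. \<integral>\<^sup>+y. ennreal (c / 2) * Psi_kernel s G \<delta> u x y + ennreal C * H x y \<partial>lebesgue \<partial>lebesgue)"
    unfolding Psi_eq_nn_integral_Psi_kernel H_def g_def C_def
    using Psi_kernel_mult_le[OF G \<delta> _ e e_lip L] s by (intro nn_integral_mono) auto
  also have "\<dots> = ennreal (c / 2) * Psi s G \<delta> u + ennreal C * (\<integral>\<^sup>+x. \<integral>\<^sup>+y. H x y \<partial>lebesgue \<partial>lebesgue)"
    unfolding Psi_eq_nn_integral_Psi_kernel H_def
    by (intro nn_integral_nn_integral_linear sigma_finite_lebesgue borel_measurable_Psi_kernel[OF G u]
        borel_measurable_ball_dist_powr_kernel g_meas)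
  also have "\<dots> \<le> ennreal (c / 2) * Psi s G \<delta> u + ennreal C * (ennreal S * (\<integral>\<^sup>+y. g y \<partial>lebesgue))"
    unfolding H_def S_def using b \<delta>
    by (intro add_left_mono mult_left_mono nn_integral_ball_dist_powr_kernel_le g_meas) auto
  finally show ?thesis
    by (simp add: g_def const mult.assoc[symmetric])
qed

lemma GDERIV_norm_bound_imp_dist_le:
  fixes f :: "'a::{real_inner, perfect_space} \<Rightarrow> real"
  assumes "\<And>x. \<exists>D. (GDERIV f x :> D) \<and> norm D \<le> B"
  shows "\<bar>f a - f b\<bar> \<le> B * dist a b"
proof -
  obtain D where D: "\<And>x. GDERIV f x :> D x" "\<And>x. norm (D x) \<le> B"
    using assms by metis
  have "norm (f a - f b) \<le> B * norm (a - b)"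
  proof (rule differentiable_bound[of UNIV f "\<lambda>x h. inner h (D x)"])
    fix x
    show "(f has_derivative (\<lambda>h. inner h (D x))) (at x within UNIV)"
      using D(1)[of x] by (simp add: gderiv_def)
    show "onorm (\<lambda>h. inner h (D x)) \<le> B"
    proof (rule onorm_le)
      fix h
      have "norm (inner h (D x)) \<le> norm h * norm (D x)"
        using Cauchy_Schwarz_ineq2 by simp
      also have "\<dots> \<le> B * norm h"
        using D(2)[of x] by (metis mult.commute mult_left_mono norm_ge_zero)
      finally show "norm (inner h (D x)) \<le> B * norm h" .
    qed
  qed auto
  then show ?thesis
    by (simp add: dist_norm)
qed

theorem lemma2p14:
  fixes u \<eta> :: "'a::euclidean_space \<Rightarrow> real"
    and G :: "real \<Rightarrow> real" and c s \<delta> :: real and k :: nat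
  assumes "\<delta> > 0" and "0 < s" and "s < 1"
    and "orlicz G c"
    and "in_LG G u"
    and "smooth_fun \<eta>"
    and "\<forall>x. 0 \<le> \<eta> x \<and> \<eta> x \<le> 1"
    and "\<forall>x\<in>ball 0 1. \<eta> x = 1"
    and "closure {x. \<eta> x \<noteq> 0} = cball 0 2"
    and "\<forall>x. \<exists>D. (GDERIV \<eta> x :> D) \<and> norm D \<le> 2"
    and "k \<ge> 1"
  shows "Psi s G \<delta> (\<lambda>x. \<eta> (x /\<^sub>R real k) * u x)
     \<le> ennreal (c / 2) * Psi s G \<delta> u
       + ennreal (real DIM('a) * sphere_area TYPE('a) * c^2 / (2 * real k * (1 - s)))
         * (\<integral>\<^sup>+ x. ennreal (G (\<bar>u x\<bar> * \<delta> powr (1 - s))) \<partial>lebesgue)"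
proof -
  \<comment> \<open>Since sphere_area already carries
     the factor DIM('a), the argument gives the bound even without the extra factor DIM('a).\<close>
  have k: "1 \<le> real k"
    using \<open>k \<ge> 1\<close> by simp
  then have L: "0 \<le> 2 / real k" "2 / real k \<le> 2"
    by (auto simp: field_simps)
  have u: "u \<in> borel_measurable lebesgue"
    using \<open>in_LG G u\<close> by (simp add: in_LG_def)
  have cutoff_lip: "\<bar>\<eta> (x /\<^sub>R real k) - \<eta> (y /\<^sub>R real k)\<bar> \<le> 2 / real k * dist x y" for x y :: 'a
    using GDERIV_norm_bound_imp_dist_le[of \<eta> 2 "x /\<^sub>R real k" "y /\<^sub>R real k"] assms(10) k
    by (simp add: dist_norm scaleR_diff_right[symmetric] divide_inverse mult_ac)
  have "c\<^sup>2 * (2 / real k) * sphere_area TYPE('a) / (4 * (1 - s))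
      = 1 * (sphere_area TYPE('a) * c\<^sup>2 / (2 * real k * (1 - s)))"
    using \<open>s < 1\<close> k by (simp add: field_simps)
  also have "\<dots> \<le> real DIM('a) * (sphere_area TYPE('a) * c\<^sup>2 / (2 * real k * (1 - s)))"
    using \<open>s < 1\<close> k DIM_positive[where 'a='a] by (intro mult_right_mono) (auto simp: sphere_area_def)
  finally have "ennreal (c\<^sup>2 * (2 / real k) * sphere_area TYPE('a) / (4 * (1 - s)))
      \<le> ennreal (real DIM('a) * sphere_area TYPE('a) * c^2 / (2 * real k * (1 - s)))"
    by (simp add: ennreal_leI mult.assoc)
  then show ?thesis
    using Psi_mult_le[OF \<open>orlicz G c\<close> \<open>\<delta> > 0\<close> \<open>0 < s\<close> \<open>s < 1\<close> u _ cutoff_lip L] assms(7)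
    by (auto elim!: order_trans intro!: add_left_mono mult_right_mono)
qed

end
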